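(* Let $\pi\sim M(\phi,\sigma)$ be a ranking of $[m]$ drawn from the Mallows model, and let $1\le\tau\le m$. Then for all $s\le m$, the probability that none of the top $s$ items of the reference ranking $\sigma$ appears among the top $\tau$ positions of $\pi$ satisfies $$\Pr\big(\text{each of the items ranked }1,\dots,s\text{ in }\sigma\text{ is ranked below position }\tau\text{ in }\pi\big)\le\begin{cases}\phi^{\tau s}(1-\phi^{m-\tau})^s/(1-\phi^m)^s&\text{if }\phi<1,\\ (1-\tau/m)^s&\text{if }\phi=1.\end{cases}$$
   Context: The Mallows model $M(\phi,\sigma)$ on rankings of $[m]$, with reference ranking $\sigma$ and dispersion parameter $\phi\in[0,1]$, assigns to a ranking $\pi$ probability $\phi^{d(\pi,\sigma)}/Z(\phi)$, where $d$ is the Kendall-tau distance (the number of pairs of items ordered differently by the two rankings) and $Z(\phi)=\prod_{j=1}^{m}(1+\phi+\dots+\phi^{j-1})$ is the normalizing constant. *)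

theory Defs
  imports "HOL-Combinatorics.Permutations" Complex_Main
begin

text \<open>Items and positions are both {1..m}. A ranking is a bijection rk on {1..m}
  (rk i = position of item i, 1 = top), represented as a permutation of {1..m}.\<close>

definition rankings :: "nat \<Rightarrow> (nat \<Rightarrow> nat) set" where
  "rankings m = {rk. rk permutes {1..m}}"

definition kendall_tau :: "nat \<Rightarrow> (nat \<Rightarrow> nat) \<Rightarrow> (nat \<Rightarrow> nat) \<Rightarrow> nat" where
  "kendall_tau m rk sigma =
     card {(i, j). i \<in> {1..m} \<and> j \<in> {1..m} \<and> i < j \<and>
                   ((rk i < rk j) \<noteq> (sigma i < sigma j))}"

definition mallows_Z :: "nat \<Rightarrow> real \<Rightarrow> real" where
  "mallows_Z m phi = (\<Prod>j = 1..m. \<Sum>k < j. phi ^ k)"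

definition mallows_pr :: "nat \<Rightarrow> real \<Rightarrow> (nat \<Rightarrow> nat) \<Rightarrow> (nat \<Rightarrow> nat) \<Rightarrow> real" where
  "mallows_pr m phi sigma rk = phi ^ kendall_tau m rk sigma / mallows_Z m phi"

definition mallows_prob :: "nat \<Rightarrow> real \<Rightarrow> (nat \<Rightarrow> nat) \<Rightarrow> (nat \<Rightarrow> nat) set \<Rightarrow> real" where
  "mallows_prob m phi sigma A = (\<Sum>rk \<in> rankings m \<inter> A. mallows_pr m phi sigma rk)"

end

theory Submission
  imports Defs "HOL-Combinatorics.Multiset_Permutations"
begin

(* Read a ranking from the top position down and replace every item by its position in
   sigma. This turns the ranking into a permutation of [m] whose inversions are exactly the
   pairs on which it disagrees with sigma, so Z(phi) becomes the inversion generating function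
   prod_j [j] of the q-integers [j] = 1 + phi + ... + phi^(j-1), and the event becomes "the
   first tau entries avoid the labels 1..s".
   Removing the first entry x of a permutation of a set S removes rank_S(x) inversions, so the
   restricted weight H_tau(S) (inversion_gf_avoiding) is the sum over x in S - T of
   phi^rank_S(x) * H_(tau-1)(S - {x}). Since T = {1..s} consists of the s smallest labels,
   these weights add up to [n] - [s] = phi^s [n-s], and induction on tau gives
   H_tau / Z <= (phi^tau [m-tau] / [m])^s; the inductive step is the inequality
   [n-s] [n]^(s-1) <= [n-1]^s between q-integers for 0 <= phi <= 1. The closed forms
   [k] = (1 - phi^k) / (1 - phi), resp. [k] = k for phi = 1, give the stated bound. *)

definition qint :: "'a::comm_semiring_1 \<Rightarrow> nat \<Rightarrow> 'a" where
  "qint p k = (\<Sum>i<k. p ^ i)"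

lemma qint_0 [simp]: "qint p 0 = 0"
  by (simp add: qint_def)

lemma qint_Suc: "qint p (Suc k) = qint p k + p ^ k"
  by (simp add: qint_def)

lemma qint_add: "qint p (k + l) = qint p k + p ^ k * qint p l"
  by (induction l) (simp_all add: qint_Suc power_add algebra_simps)

lemma qint_diff: "k \<le> n \<Longrightarrow> qint (p::'a::comm_ring_1) n - qint p k = p ^ k * qint p (n - k)"
  using qint_add[of p k "n - k"] by simp

lemma qint_nonneg: "0 \<le> p \<Longrightarrow> 0 \<le> qint (p::'a::linordered_semidom) k"
  by (simp add: qint_def sum_nonneg)

lemma qint_pos: "0 \<le> p \<Longrightarrow> 0 < k \<Longrightarrow> 0 < qint (p::'a::linordered_semidom) k"
proof (induction k)
  case (Suc k)
  then show ?case
    by (cases "k = 0") (auto simp: qint_Suc intro: add_pos_nonneg)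
qed simp

lemma qint_mult_Suc_le:
  fixes p :: "'a::linordered_semidom"
  assumes "0 \<le> p" "p \<le> 1" "k \<le> n"
  shows "qint p k * qint p (Suc n) \<le> qint p (Suc k) * qint p n"
proof -
  have "qint p k * p ^ n = (\<Sum>i<k. p ^ (i + n))"
    by (simp add: qint_def sum_distrib_right power_add)
  also have "\<dots> \<le> (\<Sum>i<k. p ^ (i + k))"
    by (rule sum_mono) (simp add: power_decreasing assms)
  also have "\<dots> \<le> (\<Sum>i<n. p ^ (i + k))"
    by (rule sum_mono2) (auto simp: assms)
  also have "\<dots> = p ^ k * qint p n"
    by (simp add: qint_def sum_distrib_left power_add mult.commute)
  finally have "qint p k * p ^ n \<le> p ^ k * qint p n" .
  then show ?thesis by (simp add: qint_Suc algebra_simps)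
qed

lemma qint_mult_power_Suc_le:
  fixes p :: "'a::linordered_semidom"
  assumes "0 \<le> p" "p \<le> 1" "k + t \<le> Suc n"
  shows "qint p k * qint p (Suc n) ^ t \<le> qint p (k + t) * qint p n ^ t"
  using assms(3)
proof (induction t arbitrary: k)
  case 0 then show ?case by simp
next
  case (Suc t)
  have "qint p k * qint p (Suc n) ^ Suc t = (qint p k * qint p (Suc n)) * qint p (Suc n) ^ t"
    by (simp add: algebra_simps)
  also have "\<dots> \<le> (qint p (Suc k) * qint p n) * qint p (Suc n) ^ t"
    using Suc.prems by (intro mult_right_mono qint_mult_Suc_le) (simp_all add: assms qint_nonneg)
  also have "\<dots> = qint p n * (qint p (Suc k) * qint p (Suc n) ^ t)"
    by (simp add: algebra_simps)
  also have "\<dots> \<le> qint p n * (qint p (Suc k + t) * qint p n ^ t)"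
    using Suc.prems by (intro mult_left_mono Suc.IH) (simp_all add: assms qint_nonneg)
  finally show ?case by (simp add: algebra_simps)
qed

lemma qint_diff_mult_power_le:
  fixes p :: "'a::linordered_idom"
  assumes "0 \<le> p" "p \<le> 1" "s \<le> n"
  shows "(qint p n - qint p s) * qint p n ^ s \<le> p ^ s * qint p (n - 1) ^ s * qint p n"
proof (cases s)
  case 0 then show ?thesis by simp
next
  case (Suc t)
  then obtain n' where n: "n = Suc n'" using assms(3) by (cases n) auto
  have "qint p (n - s) * qint p n ^ t \<le> qint p (n - s + t) * qint p n' ^ t"
    unfolding n using assms Suc n by (intro qint_mult_power_Suc_le) auto
  also have "\<dots> = qint p (n - 1) ^ s"
    using assms(3) Suc n by simp
  finally have "p ^ s * (qint p (n - s) * qint p n ^ t) * qint p n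
      \<le> p ^ s * qint p (n - 1) ^ s * qint p n"
    using assms by (intro mult_right_mono mult_left_mono) (simp_all add: qint_nonneg)
  then show ?thesis
    using assms(3) Suc by (simp add: qint_diff algebra_simps)
qed

definition rank_in :: "'a::linorder set \<Rightarrow> 'a \<Rightarrow> nat" where
  "rank_in S x = card {y \<in> S. y < x}"

lemma rank_in_initial_segment:
  assumes "T \<subseteq> S" "\<forall>t\<in>T. \<forall>y\<in>S - T. t < y" "x \<in> T"
  shows "rank_in S x = rank_in T x"
proof -
  have "{y \<in> S. y < x} = {y \<in> T. y < x}"
    using assms less_asym by blast
  then show ?thesis by (simp add: rank_in_def)
qed

lemma sum_power_rank_in:
  "finite S \<Longrightarrow> (\<Sum>x\<in>S. p ^ rank_in S x) = qint p (card S)"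
proof (induction "card S" arbitrary: S)
  case 0 then show ?case by simp
next
  case (Suc n)
  define M where "M = Max S"
  have "S \<noteq> {}" using Suc.hyps(2) by auto
  then have M: "M \<in> S" "\<And>y. y \<in> S \<Longrightarrow> y \<le> M"
    using Suc.prems by (simp_all add: M_def)
  have "rank_in S x = rank_in (S - {M}) x" if "x \<in> S - {M}" for x
    using that M by (intro rank_in_initial_segment) (auto intro: le_neq_trans)
  moreover have "rank_in S M = n"
  proof -
    have "{y \<in> S. y < M} = S - {M}" using M by (auto intro: le_neq_trans)
    then show ?thesis using Suc.hyps(2) Suc.prems M by (simp add: rank_in_def)
  qed
  ultimately have "(\<Sum>x\<in>S. p ^ rank_in S x) = p ^ n + (\<Sum>x\<in>S - {M}. p ^ rank_in (S - {M}) x)"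
    using Suc.prems M by (simp add: sum.remove[of S M])
  also have "\<dots> = qint p (Suc n)"
    using Suc.hyps(1)[of "S - {M}"] Suc.prems M(1) by (simp add: qint_Suc add.commute flip: Suc.hyps(2))
  finally show ?case using Suc.hyps(2) by simp
qed

lemma sum_power_rank_in_diff:
  fixes p :: "'a::comm_ring_1"
  assumes "finite S" "T \<subseteq> S" "\<forall>t\<in>T. \<forall>y\<in>S - T. t < y"
  shows "(\<Sum>x\<in>S - T. p ^ rank_in S x) = qint p (card S) - qint p (card T)"
proof -
  have "finite T" using assms(1,2) by (rule rev_finite_subset)
  have "(\<Sum>x\<in>T. p ^ rank_in S x) = (\<Sum>x\<in>T. p ^ rank_in T x)"
    using assms(2,3) by (intro sum.cong) (simp_all add: rank_in_initial_segment)
  then show ?thesis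
    using assms \<open>finite T\<close> by (simp add: sum_diff sum_power_rank_in)
qed

definition inversions :: "'a::linorder list \<Rightarrow> nat" where
  "inversions xs = card {(i, j). i < j \<and> j < length xs \<and> xs ! j < xs ! i}"

lemma inversions_Cons:
  "inversions (x # xs) = card {j. j < length xs \<and> xs ! j < x} + inversions xs"
proof -
  let ?P = "\<lambda>xs. {(i, j). i < j \<and> j < length xs \<and> xs ! j < xs ! i}"
  have fin: "finite (?P xs)"
    by (rule finite_subset[of _ "{..<length xs} \<times> {..<length xs}"]) auto
  let ?A = "(\<lambda>j. (0::nat, Suc j)) ` {j. j < length xs \<and> xs ! j < x}"
  let ?B = "map_prod Suc Suc ` ?P xs"
  have "?P (x # xs) = ?A \<union> ?B"
  proof (intro equalityI subsetI)
    fix z assume "z \<in> ?P (x # xs)"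
    then obtain i j where "z = (i, Suc j)" "i \<le> j" "j < length xs" "xs ! j < (x # xs) ! i"
      by (auto simp: less_Suc_eq_0_disj)
    then show "z \<in> ?A \<union> ?B"
      by (cases i) auto
  qed (auto simp: nth_Cons')
  moreover have "card (?A \<union> ?B) = card ?A + card ?B"
    using fin by (intro card_Un_disjoint) auto
  moreover have "card ?A = card {j. j < length xs \<and> xs ! j < x}"
    by (rule card_image) (simp add: inj_on_def)
  moreover have "card ?B = card (?P xs)"
    by (rule card_image) (simp add: inj_on_def)
  ultimately show ?thesis
    unfolding inversions_def by simp
qed

lemma inversions_Cons_permutation:
  assumes "x \<in> S" "ys \<in> permutations_of_set (S - {x})"
  shows "inversions (x # ys) = rank_in S x + inversions ys"
proof -
  have ys: "set ys = S - {x}" "distinct ys" using assms(2) by (auto dest: permutations_of_setD)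
  let ?J = "{j. j < length ys \<and> ys ! j < x}"
  have "{y \<in> S. y < x} = {y \<in> set ys. y < x}"
    using ys(1) by auto
  also have "\<dots> = (!) ys ` ?J"
    by (auto simp: in_set_conv_nth)
  finally have "{y \<in> S. y < x} = (!) ys ` ?J" .
  moreover have "inj_on ((!) ys) ?J"
    using ys(2) by (intro inj_on_nth) auto
  ultimately have "rank_in S x = card ?J"
    by (simp add: rank_in_def card_image)
  then show ?thesis
    by (simp add: inversions_Cons)
qed

lemma sum_permutations_of_set_Cons:
  assumes "finite S" "S \<noteq> {}"
  shows "(\<Sum>xs\<in>permutations_of_set S. f xs)
       = (\<Sum>x\<in>S. \<Sum>ys\<in>permutations_of_set (S - {x}). f (x # ys))"
proof -
  have "(\<Sum>xs\<in>permutations_of_set S. f xs)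
      = (\<Sum>x\<in>S. \<Sum>xs\<in>(#) x ` permutations_of_set (S - {x}). f xs)"
    unfolding permutations_of_set_nonempty[OF assms(2)] using assms(1)
    by (intro sum.UNION_disjoint) auto
  also have "\<dots> = (\<Sum>x\<in>S. \<Sum>ys\<in>permutations_of_set (S - {x}). f (x # ys))"
    by (intro sum.cong[OF refl], subst sum.reindex) (auto simp: inj_on_def)
  finally show ?thesis .
qed

lemma sum_permutations_of_set_inversions_Cons:
  fixes p :: "'a::comm_semiring_1"
  assumes "finite S" "S \<noteq> {}"
  shows "(\<Sum>xs\<in>permutations_of_set S. p ^ inversions xs * f xs)
       = (\<Sum>x\<in>S. p ^ rank_in S x *
            (\<Sum>ys\<in>permutations_of_set (S - {x}). p ^ inversions ys * f (x # ys)))"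
proof -
  have "(\<Sum>ys\<in>permutations_of_set (S - {x}). p ^ inversions (x # ys) * f (x # ys))
      = p ^ rank_in S x * (\<Sum>ys\<in>permutations_of_set (S - {x}). p ^ inversions ys * f (x # ys))"
    if "x \<in> S" for x
    unfolding sum_distrib_left using that
    by (intro sum.cong[OF refl]) (simp add: inversions_Cons_permutation power_add mult.assoc)
  then show ?thesis
    unfolding sum_permutations_of_set_Cons[OF assms] by simp
qed

definition inversion_gf :: "'a::comm_semiring_1 \<Rightarrow> 'b::linorder set \<Rightarrow> 'a" where
  "inversion_gf p S = (\<Sum>xs\<in>permutations_of_set S. p ^ inversions xs)"

lemma inversion_gf_eq_prod_qint:
  "finite S \<Longrightarrow> inversion_gf p S = (\<Prod>j = 1..card S. qint p j)"
proof (induction "card S" arbitrary: S)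
  case 0 then show ?case by (simp add: inversion_gf_def inversions_def)
next
  case (Suc n)
  then have "S \<noteq> {}" by auto
  have "inversion_gf p S = (\<Sum>x\<in>S. p ^ rank_in S x * inversion_gf p (S - {x}))"
    using sum_permutations_of_set_inversions_Cons[OF Suc.prems \<open>S \<noteq> {}\<close>, of p "\<lambda>_. 1"]
    by (simp add: inversion_gf_def)
  also have "\<dots> = (\<Sum>x\<in>S. p ^ rank_in S x) * (\<Prod>j = 1..n. qint p j)"
  proof -
    have "inversion_gf p (S - {x}) = (\<Prod>j = 1..n. qint p j)" if "x \<in> S" for x
      using Suc.hyps(1)[of "S - {x}"] Suc.prems that by (simp flip: Suc.hyps(2))
    then show ?thesis
      unfolding sum_distrib_right by simp
  qed
  also have "\<dots> = (\<Prod>j = 1..Suc n. qint p j)"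
    using Suc by (simp add: sum_power_rank_in prod.nat_ivl_Suc' mult.commute flip: Suc.hyps(2))
  finally show ?case using Suc.hyps(2) by simp
qed

lemma inversion_gf_remove:
  "finite S \<Longrightarrow> x \<in> S \<Longrightarrow> inversion_gf p S = qint p (card S) * inversion_gf p (S - {x})"
  by (cases "card S") (simp_all add: inversion_gf_eq_prod_qint prod.nat_ivl_Suc' mult.commute)

lemma inversion_gf_pos:
  "finite S \<Longrightarrow> 0 \<le> p \<Longrightarrow> 0 < inversion_gf (p::'a::linordered_semidom) S"
  by (auto simp: inversion_gf_eq_prod_qint intro!: prod_pos qint_pos)

definition inversion_gf_avoiding ::
    "'a::comm_semiring_1 \<Rightarrow> 'b::linorder set \<Rightarrow> nat \<Rightarrow> 'b set \<Rightarrow> 'a" where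
  "inversion_gf_avoiding p T k S =
     (\<Sum>xs\<in>permutations_of_set S. p ^ inversions xs * of_bool (set (take k xs) \<inter> T = {}))"

lemma inversion_gf_avoiding_0: "inversion_gf_avoiding p T 0 S = inversion_gf p S"
  by (simp add: inversion_gf_avoiding_def inversion_gf_def)

lemma inversion_gf_avoiding_Suc:
  assumes "finite S" "S \<noteq> {}"
  shows "inversion_gf_avoiding p T (Suc k) S
       = (\<Sum>x\<in>S - T. p ^ rank_in S x * inversion_gf_avoiding p T k (S - {x}))"
proof -
  have "inversion_gf_avoiding p T (Suc k) S
      = (\<Sum>x\<in>S. of_bool (x \<notin> T) * (p ^ rank_in S x * inversion_gf_avoiding p T k (S - {x})))"
    unfolding inversion_gf_avoiding_def sum_permutations_of_set_inversions_Cons[OF assms]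
    by (intro sum.cong[OF refl]) (auto simp: sum_distrib_left)
  also have "\<dots> = (\<Sum>x\<in>S - T. p ^ rank_in S x * inversion_gf_avoiding p T k (S - {x}))"
    using assms(1) by (simp add: Diff_eq Int_def)
  finally show ?thesis .
qed

lemma inversion_gf_avoiding_Suc_le:
  fixes p :: "'a::linordered_idom"
  assumes "0 \<le> p" "finite S" "S \<noteq> {}" "T \<subseteq> S" "\<forall>t\<in>T. \<forall>y\<in>S - T. t < y"
    and "\<And>x. x \<in> S - T \<Longrightarrow> inversion_gf_avoiding p T k (S - {x}) \<le> C"
  shows "inversion_gf_avoiding p T (Suc k) S \<le> (qint p (card S) - qint p (card T)) * C"
proof -
  have "inversion_gf_avoiding p T (Suc k) S \<le> (\<Sum>x\<in>S - T. p ^ rank_in S x * C)"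
    unfolding inversion_gf_avoiding_Suc[OF assms(2,3)]
    using assms(1,6) by (intro sum_mono mult_left_mono) auto
  also have "\<dots> = (qint p (card S) - qint p (card T)) * C"
    unfolding sum_distrib_right[symmetric] using assms(2,4,5) by (simp only: sum_power_rank_in_diff)
  finally show ?thesis .
qed

lemma inversion_gf_avoiding_le:
  fixes p :: "'a::linordered_field"
  assumes "0 \<le> p" "p \<le> 1"
    and "finite S" "T \<subseteq> S" "\<forall>t\<in>T. \<forall>y\<in>S - T. t < y" "k \<le> card S"
  shows "inversion_gf_avoiding p T k S * qint p (card S) ^ card T
       \<le> (p ^ k * qint p (card S - k)) ^ card T * inversion_gf p S"
  using assms(3-)
proof (induction k arbitrary: S)
  case 0
  then show ?case by (simp add: inversion_gf_avoiding_0)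
next
  case (Suc k)
  define n where "n = card S"
  define s where "s = card T"
  define A where "A = (p ^ k * qint p (n - Suc k)) ^ s"
  have "S \<noteq> {}" using Suc.prems(4) by (auto simp: n_def)
  have G: "0 < inversion_gf p S" using Suc.prems(1) assms(1) by (rule inversion_gf_pos)
  show ?case
  proof (cases "S - T = {}")
    case True
    have "inversion_gf_avoiding p T (Suc k) S = 0"
      by (simp only: inversion_gf_avoiding_Suc[OF Suc.prems(1) \<open>S \<noteq> {}\<close>] True sum.empty)
    then show ?thesis
      using assms(1) G by (simp add: qint_nonneg)
  next
    case False
    then obtain x0 where "x0 \<in> S - T" by blast
    then have "s \<le> n - 1"
      using Suc.prems(1,2) card_mono[of "S - {x0}" T] by (auto simp: s_def n_def)
    define d where "d = qint p n * qint p (n - 1) ^ s"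
    have d: "0 < d"
      using \<open>s \<le> n - 1\<close> assms(1) Suc.prems(4)
      by (cases "s = 0") (auto simp: d_def n_def intro!: mult_pos_pos zero_less_power qint_pos)
    define C where "C = A * inversion_gf p S / d"
    have "inversion_gf_avoiding p T k (S - {x}) \<le> C" if "x \<in> S - T" for x
    proof -
      have "T \<subseteq> S - {x}" "\<forall>t\<in>T. \<forall>y\<in>S - {x} - T. t < y" "k \<le> card (S - {x})"
        using Suc.prems that by auto
      then have "inversion_gf_avoiding p T k (S - {x}) * qint p (n - 1) ^ s
          \<le> A * inversion_gf p (S - {x})"
        using Suc.IH[of "S - {x}"] Suc.prems(1) that by (simp add: A_def n_def s_def)
      then have "qint p n * (inversion_gf_avoiding p T k (S - {x}) * qint p (n - 1) ^ s)
          \<le> qint p n * (A * inversion_gf p (S - {x}))"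
        using assms(1) by (intro mult_left_mono) (simp_all add: qint_nonneg)
      also have "\<dots> = A * inversion_gf p S"
        using inversion_gf_remove[of S x p] Suc.prems(1) that by (simp add: n_def mult_ac)
      finally have "qint p n * (inversion_gf_avoiding p T k (S - {x}) * qint p (n - 1) ^ s)
          \<le> A * inversion_gf p S" .
      then show ?thesis
        using d by (simp add: C_def d_def pos_le_divide_eq mult_ac)
    qed
    then have "inversion_gf_avoiding p T (Suc k) S \<le> (qint p n - qint p s) * C"
      unfolding n_def s_def using assms(1) Suc.prems(1-3) \<open>S \<noteq> {}\<close>
      by (intro inversion_gf_avoiding_Suc_le) auto
    then have "inversion_gf_avoiding p T (Suc k) S * qint p n ^ s
        \<le> (qint p n - qint p s) * C * qint p n ^ s"
      using assms(1) by (intro mult_right_mono) (simp_all add: qint_nonneg)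
    also have "\<dots> = (qint p n - qint p s) * qint p n ^ s * C"
      by (simp add: mult_ac)
    also have "\<dots> \<le> p ^ s * d * C"
    proof (rule mult_right_mono)
      show "(qint p n - qint p s) * qint p n ^ s \<le> p ^ s * d"
        using qint_diff_mult_power_le[of p s n] assms(1,2) Suc.prems(1,2)
        by (simp add: s_def n_def d_def card_mono mult_ac)
      show "0 \<le> C"
        using assms(1) d G by (simp add: C_def A_def qint_nonneg)
    qed
    also have "\<dots> = p ^ s * A * inversion_gf p S"
      using d by (simp add: C_def)
    also have "\<dots> = (p ^ Suc k * qint p (n - Suc k)) ^ s * inversion_gf p S"
      by (simp add: A_def power_mult_distrib mult_ac)
    finally show ?thesis by (simp add: n_def s_def)
  qed
qed

definition ranking_list :: "nat \<Rightarrow> (nat \<Rightarrow> nat) \<Rightarrow> (nat \<Rightarrow> nat) \<Rightarrow> nat list" where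
  "ranking_list m sigma rk = map (\<lambda>p. sigma (inv rk p)) [1..<Suc m]"

lemma length_ranking_list [simp]: "length (ranking_list m sigma rk) = m"
  by (simp add: ranking_list_def)

lemma nth_ranking_list: "i < m \<Longrightarrow> ranking_list m sigma rk ! i = sigma (inv rk (Suc i))"
  by (simp add: ranking_list_def nth_append del: upt_Suc)

lemma set_take_ranking_list:
  assumes "rk permutes {1..m}" "k \<le> m"
  shows "set (take k (ranking_list m sigma rk)) = sigma ` {i \<in> {1..m}. rk i \<le> k}"
proof -
  have "take k (ranking_list m sigma rk) = map (\<lambda>p. sigma (inv rk p)) [1..<Suc k]"
    using assms(2) by (simp add: ranking_list_def take_map del: upt_Suc)
  then have "set (take k (ranking_list m sigma rk)) = sigma ` inv rk ` {1..k}"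
    by (simp add: image_image atLeastLessThanSuc_atLeastAtMost del: upt_Suc)
  also have "inv rk ` {1..k} = {i \<in> {1..m}. rk i \<le> k}"
  proof (intro equalityI subsetI)
    fix i assume "i \<in> inv rk ` {1..k}"
    then obtain p where "p \<in> {1..k}" "i = inv rk p" by blast
    then show "i \<in> {i \<in> {1..m}. rk i \<le> k}"
      using assms(2) permutes_in_image[OF permutes_inv[OF assms(1)], of p]
        permutes_inverses(1)[OF assms(1)] by auto
  next
    fix i assume "i \<in> {i \<in> {1..m}. rk i \<le> k}"
    then have "rk i \<in> {1..k}" "inv rk (rk i) = i"
      using permutes_in_image[OF assms(1), of i] permutes_inverses(2)[OF assms(1)] by auto
    then show "i \<in> inv rk ` {1..k}" by (metis imageI)
  qed
  finally show ?thesis .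
qed

lemma bij_betw_ranking_list:
  assumes "sigma permutes {1..m}"
  shows "bij_betw (ranking_list m sigma) (rankings m) (permutations_of_set {1..m})"
proof (rule bij_betw_imageI)
  have "ranking_list m sigma rk \<in> permutations_of_set {1..m}" if "rk permutes {1..m}" for rk
  proof
    have "set (ranking_list m sigma rk) = sigma ` {i \<in> {1..m}. rk i \<le> m}"
      using set_take_ranking_list[OF that order.refl, of sigma] by simp
    also have "{i \<in> {1..m}. rk i \<le> m} = {1..m}"
      using permutes_in_image[OF that] atLeastAtMost_iff by blast
    finally show "set (ranking_list m sigma rk) = {1..m}"
      using permutes_image[OF assms] by simp
    have "inj (\<lambda>p. sigma (inv rk p))"
      using inj_compose[OF permutes_inj[OF assms] permutes_inj[OF permutes_inv[OF that]]]
      by (simp add: comp_def)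
    then have "inj_on (\<lambda>p. sigma (inv rk p)) (set [1..<Suc m])"
      by (rule inj_on_subset) simp
    then show "distinct (ranking_list m sigma rk)"
      by (simp add: ranking_list_def distinct_map del: upt_Suc)
  qed
  then have sub: "ranking_list m sigma ` rankings m \<subseteq> permutations_of_set {1..m}"
    by (auto simp: rankings_def)
  show inj: "inj_on (ranking_list m sigma) (rankings m)"
  proof (rule inj_onI)
    fix r1 r2 assume r: "r1 \<in> rankings m" "r2 \<in> rankings m"
      and eq: "ranking_list m sigma r1 = ranking_list m sigma r2"
    then have perm: "r1 permutes {1..m}" "r2 permutes {1..m}" by (auto simp: rankings_def)
    have "inv r1 p = inv r2 p" for p
    proof (cases "p \<in> {1..m}")
      case True
      then have "p - 1 < m" "Suc (p - 1) = p" by auto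
      then have "sigma (inv r1 p) = sigma (inv r2 p)"
        using eq nth_ranking_list[of "p - 1" m sigma] by metis
      then show ?thesis using permutes_inj[OF assms] by (simp add: inj_eq)
    next
      case False
      then show ?thesis using permutes_inv[OF perm(1)] permutes_inv[OF perm(2)] by (simp add: permutes_not_in)
    qed
    then have "inv r1 = inv r2" ..
    then show "r1 = r2"
      using permutes_inv_inv[OF perm(1)] permutes_inv_inv[OF perm(2)] by metis
  qed
  have "card (rankings m) = fact m"
    unfolding rankings_def by (rule card_permutations) simp_all
  then have "card (ranking_list m sigma ` rankings m) = card (permutations_of_set {1..m})"
    by (simp add: card_image[OF inj])
  then show "ranking_list m sigma ` rankings m = permutations_of_set {1..m}"
    by (rule card_subset_eq[OF finite_permutations_of_set sub])
qed

lemma kendall_tau_eq_card_discordant: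
  assumes "inj_on rk {1..m}" "inj_on sigma {1..m}"
  shows "kendall_tau m rk sigma
       = card {(a, b). a \<in> {1..m} \<and> b \<in> {1..m} \<and> rk a < rk b \<and> sigma b < sigma a}"
    (is "_ = card ?D")
proof -
  let ?K = "{(i, j). i \<in> {1..m} \<and> j \<in> {1..m} \<and> i < j \<and> (rk i < rk j) \<noteq> (sigma i < sigma j)}"
  let ?f = "\<lambda>(a, b). if a < b then (a, b) else (b, a)"
  let ?g = "\<lambda>(i, j). if rk i < rk j then (i, j) else (j, i)"
  have neq: "rk a \<noteq> rk b" "sigma a \<noteq> sigma b" if "a \<in> {1..m}" "b \<in> {1..m}" "a \<noteq> b" for a b
    using assms that by (auto dest: inj_onD)
  have "bij_betw ?f ?D ?K"
  proof (rule bij_betw_byWitness[where f' = ?g])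
    show "\<forall>z\<in>?D. ?g (?f z) = z"
      by (auto dest: less_asym)
    show "\<forall>z\<in>?K. ?f (?g z) = z"
      by auto
    show "?f ` ?D \<subseteq> ?K"
    proof (rule image_subsetI)
      fix z assume "z \<in> ?D"
      then obtain a b where "z = (a, b)" "a \<in> {1..m}" "b \<in> {1..m}" "rk a < rk b" "sigma b < sigma a"
        by blast
      moreover have "a \<noteq> b" using \<open>rk a < rk b\<close> by auto
      ultimately show "?f z \<in> ?K"
        by (cases "a < b") auto
    qed
    show "?g ` ?K \<subseteq> ?D"
    proof (rule image_subsetI)
      fix z assume "z \<in> ?K"
      then obtain i j where ij: "z = (i, j)" "i \<in> {1..m}" "j \<in> {1..m}" "i < j"
          "(rk i < rk j) \<noteq> (sigma i < sigma j)"
        by blast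
      moreover have "rk i \<noteq> rk j" "sigma i \<noteq> sigma j"
        using neq ij(2-4) by auto
      ultimately show "?g z \<in> ?D"
        by (cases "rk i < rk j") auto
    qed
  qed
  then show ?thesis
    unfolding kendall_tau_def by (simp add: bij_betw_same_card)
qed

lemma inversions_ranking_list:
  assumes "rk permutes {1..m}"
  shows "inversions (ranking_list m sigma rk)
       = card {(a, b). a \<in> {1..m} \<and> b \<in> {1..m} \<and> rk a < rk b \<and> sigma b < sigma a}"
    (is "_ = card ?D")
proof -
  let ?P = "{(i, j). i < j \<and> j < m \<and> sigma (inv rk (Suc j)) < sigma (inv rk (Suc i))}"
  let ?f = "\<lambda>(i, j). (inv rk (Suc i), inv rk (Suc j))"
  let ?g = "\<lambda>(a, b). (rk a - 1, rk b - 1)"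
  have rk: "0 < a \<Longrightarrow> a \<le> m \<Longrightarrow> 0 < rk a" "0 < a \<Longrightarrow> a \<le> m \<Longrightarrow> rk a - 1 < m"
    "0 < a \<Longrightarrow> a \<le> m \<Longrightarrow> rk a - 1 < rk b - 1 \<longleftrightarrow> rk a < rk b" "inv rk (rk a) = a" for a b
    using permutes_in_image[OF assms, of a] permutes_inverses(2)[OF assms] by auto
  have inv_rk: "0 < p \<Longrightarrow> p \<le> m \<Longrightarrow> 0 < inv rk p" "0 < p \<Longrightarrow> p \<le> m \<Longrightarrow> inv rk p \<le> m"
    "rk (inv rk p) = p" for p
    using permutes_in_image[OF permutes_inv[OF assms], of p] permutes_inverses(1)[OF assms] by auto
  have "bij_betw ?f ?P ?D"
    by (rule bij_betw_byWitness[where f' = ?g]) (auto simp: rk[simplified] inv_rk Suc_le_eq)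
  moreover have "{(i, j). i < j \<and> j < length (ranking_list m sigma rk)
      \<and> ranking_list m sigma rk ! j < ranking_list m sigma rk ! i} = ?P"
    by (auto simp: nth_ranking_list)
  ultimately show ?thesis
    unfolding inversions_def by (simp add: bij_betw_same_card)
qed

lemma kendall_tau_eq_inversions:
  assumes "sigma permutes {1..m}" "rk permutes {1..m}"
  shows "kendall_tau m rk sigma = inversions (ranking_list m sigma rk)"
  using kendall_tau_eq_card_discordant[OF permutes_inj_on[OF assms(2)] permutes_inj_on[OF assms(1)]]
    inversions_ranking_list[OF assms(2)]
  by simp

lemma mallows_prob_eq_inversion_gf_avoiding:
  assumes "sigma \<in> rankings m" "tau \<le> m"
  shows "mallows_prob m phi sigma {rk. \<forall>i \<in> {1..m}. sigma i \<le> s \<longrightarrow> rk i > tau}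
       = inversion_gf_avoiding phi {1..s} tau {1..m} / inversion_gf phi {1..m}"
proof -
  let ?E = "{rk. \<forall>i \<in> {1..m}. sigma i \<le> s \<longrightarrow> rk i > tau}"
  have sigma: "sigma permutes {1..m}" using assms(1) by (simp add: rankings_def)
  have event: "rk \<in> ?E \<longleftrightarrow> set (take tau (ranking_list m sigma rk)) \<inter> {1..s} = {}"
    if "rk permutes {1..m}" for rk
  proof -
    have "sigma i \<in> {1..s} \<longleftrightarrow> sigma i \<le> s" if "i \<in> {1..m}" for i
      using permutes_in_image[OF sigma, of i] that by auto
    moreover have "sigma ` {i \<in> {1..m}. rk i \<le> tau} \<inter> {1..s} = {}
        \<longleftrightarrow> (\<forall>i \<in> {1..m}. rk i \<le> tau \<longrightarrow> sigma i \<notin> {1..s})"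
      by blast
    ultimately show ?thesis
      unfolding set_take_ranking_list[OF that assms(2)] by (auto simp: not_less)
  qed
  have "(\<Sum>rk\<in>rankings m \<inter> ?E. phi ^ kendall_tau m rk sigma)
      = (\<Sum>rk\<in>rankings m. phi ^ kendall_tau m rk sigma * of_bool (rk \<in> ?E))"
    using finite_permutations[of "{1..m}"] by (simp add: rankings_def Int_def)
  also have "\<dots> = (\<Sum>rk\<in>rankings m. (\<lambda>xs. phi ^ inversions xs
      * of_bool (set (take tau xs) \<inter> {1..s} = {})) (ranking_list m sigma rk))"
  proof (rule sum.cong[OF refl])
    fix rk assume "rk \<in> rankings m"
    then have rk: "rk permutes {1..m}" by (simp add: rankings_def)
    show "phi ^ kendall_tau m rk sigma * of_bool (rk \<in> ?E) = (\<lambda>xs. phi ^ inversions xs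
      * of_bool (set (take tau xs) \<inter> {1..s} = {})) (ranking_list m sigma rk)"
      unfolding event[OF rk] kendall_tau_eq_inversions[OF sigma rk] ..
  qed
  also have "\<dots> = inversion_gf_avoiding phi {1..s} tau {1..m}"
    unfolding inversion_gf_avoiding_def by (rule sum.reindex_bij_betw[OF bij_betw_ranking_list[OF sigma]])
  finally have "(\<Sum>rk\<in>rankings m \<inter> ?E. phi ^ kendall_tau m rk sigma)
      = inversion_gf_avoiding phi {1..s} tau {1..m}" .
  moreover have "mallows_Z m phi = inversion_gf phi {1..m}"
    by (simp add: mallows_Z_def inversion_gf_eq_prod_qint qint_def)
  ultimately show ?thesis
    by (simp add: mallows_prob_def mallows_pr_def flip: sum_divide_distrib)
qed

lemma qint_ratio_eq:
  fixes phi :: real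
  assumes "phi \<le> 1" "tau \<le> m" "0 < m"
  shows "phi ^ tau * qint phi (m - tau) / qint phi m
       = (if phi < 1 then phi ^ tau * (1 - phi ^ (m - tau)) / (1 - phi ^ m) else 1 - real tau / real m)"
proof (cases "phi < 1")
  case True
  then have "1 - phi \<noteq> 0" by simp
  then show ?thesis
    using True by (simp add: qint_def sum_gp_strict divide_simps)
next
  case False
  then have "phi = 1" using assms(1) by simp
  then show ?thesis
    using assms(2,3) by (simp add: qint_def of_nat_diff divide_simps)
qed

theorem lemma2:
  fixes m tau s :: nat and phi :: real and sigma :: "nat \<Rightarrow> nat"
  assumes "0 \<le> phi" and "phi \<le> 1"
    and "sigma \<in> rankings m"
    and "1 \<le> tau" and "tau \<le> m"
    and "s \<le> m"
  shows "mallows_prob m phi sigma {rk. \<forall>i \<in> {1..m}. sigma i \<le> s \<longrightarrow> rk i > tau}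
         \<le> (if phi < 1
             then phi ^ (tau * s) * (1 - phi ^ (m - tau)) ^ s / (1 - phi ^ m) ^ s
             else (1 - real tau / real m) ^ s)"
proof -
  let ?H = "inversion_gf_avoiding phi {1..s} tau {1..m}"
  let ?G = "inversion_gf phi {1..m}"
  have "0 < m" using assms(4,5) by simp
  have "?H * qint phi m ^ s \<le> (phi ^ tau * qint phi (m - tau)) ^ s * ?G"
    using inversion_gf_avoiding_le[of phi "{1..m}" "{1..s}" tau] assms by fastforce
  moreover have "0 < ?G" "0 < qint phi m"
    using assms(1) \<open>0 < m\<close> by (simp_all add: inversion_gf_pos qint_pos)
  ultimately have "?H / ?G \<le> (phi ^ tau * qint phi (m - tau) / qint phi m) ^ s"
    by (simp add: power_divide divide_simps mult.commute)
  also have "\<dots> = (if phi < 1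
             then phi ^ (tau * s) * (1 - phi ^ (m - tau)) ^ s / (1 - phi ^ m) ^ s
             else (1 - real tau / real m) ^ s)"
    using qint_ratio_eq[OF assms(2,5) \<open>0 < m\<close>] by (simp add: power_mult_distrib power_divide power_mult)
  finally show ?thesis
    unfolding mallows_prob_eq_inversion_gf_avoiding[OF assms(3,5)] .
qed

end
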